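(* Let $q$ be a prime power, $s,\ell$ positive integers, $\alpha,\beta\in\mathbb{F}_q^*$, let $r$ be the multiplicative order of $\beta$, and assume $q\equiv 1\pmod{r\ell}$. Let $\omega\in\mathbb{F}_q$ be a primitive $r\ell$-th root of unity with $\omega^\ell=\beta$, and for $k=0,1,\dots,\ell-1$ let $$\eta_k(y)=\prod_{\substack{0\le j\le \ell-1\\ j\ne k}}\frac{y-\omega^{1+jr}}{\omega^{1+kr}-\omega^{1+jr}}\in\mathbb{F}_q[y].$$ Let $\mathcal{C}$ be an ideal of $\mathcal{R}=\mathbb{F}_q[x,y]/\langle x^s-\alpha,\,y^\ell-\beta\rangle$. For $j=0,\dots,\ell-1$ let $I_j=\{f(x)\in\mathbb{F}_q[x]/\langle x^s-\alpha\rangle:\ \eta_j(y)f(x)\in\mathcal{C}\}$ (an ideal of $\mathbb{F}_q[x]/\langle x^s-\alpha\rangle$), and let $p_j(x)$ be the unique monic divisor of $x^s-\alpha$ with $I_j=\langle p_j(x)\rangle$. Then $$\mathcal{C}=\big\langle \eta_0(y)p_0(x),\ \eta_1(y)p_1(x),\ \dots,\ \eta_{\ell-1}(y)p_{\ell-1}(x)\big\rangle .$$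
   Context: A two-dimensional $(\alpha,\beta)$-constacyclic code of length $s.\ell$ over $\mathbb{F}_q$ is identified with an ideal of $\mathcal{R}$: an $s\times\ell$ array $(c_{i,j})$ corresponds to $\sum_{i,j}c_{i,j}x^iy^j$. The polynomials $\eta_0,\dots,\eta_{\ell-1}$ are the primitive central idempotents of $\mathbb{F}_q[y]/\langle y^\ell-\beta\rangle$, where $y^\ell-\beta=\prod_{k=0}^{\ell-1}(y-\omega^{1+kr})$. *)

theory Defs
  imports "HOL-Computational_Algebra.Polynomial"
begin

text \<open>Bivariate polynomials F[x,y] are represented as 'a poly poly:
  the outer variable is y, the coefficients are polynomials in x.\<close>

definition is_ideal :: "'b::comm_ring_1 set \<Rightarrow> bool" where
  "is_ideal I \<longleftrightarrow> 0 \<in> I \<and> (\<forall>a\<in>I. \<forall>b\<in>I. a + b \<in> I) \<and> (\<forall>a\<in>I. \<forall>r. r * a \<in> I)"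

definition ideal_gen :: "'b::comm_ring_1 set \<Rightarrow> 'b set" where
  "ideal_gen S = \<Inter>{I. is_ideal I \<and> S \<subseteq> I}"

definition mult_ord :: "'a::field \<Rightarrow> nat" where
  "mult_ord b = (LEAST k. 0 < k \<and> b ^ k = 1)"

definition varX :: "'a::comm_ring_1 poly poly" where
  "varX = [:[:0, 1:]:]"

definition varY :: "'a::comm_ring_1 poly poly" where
  "varY = [:0, 1:]"

definition embX :: "'a::comm_ring_1 poly \<Rightarrow> 'a poly poly" where
  "embX f = [:f:]"

definition embY :: "'a::comm_ring_1 poly \<Rightarrow> 'a poly poly" where
  "embY g = map_poly (\<lambda>c. [:c:]) g"

definition eta :: "'a::field \<Rightarrow> nat \<Rightarrow> nat \<Rightarrow> nat \<Rightarrow> 'a poly" where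
  "eta \<omega> r l k = (\<Prod>j\<in>{0..<l} - {k}.
      smult (inverse (\<omega> ^ (1 + k * r) - \<omega> ^ (1 + j * r))) [:- (\<omega> ^ (1 + j * r)), 1:])"

end

theory Submission
  imports Defs
begin

text \<open>
  The polynomials \<open>\<eta>\<^sub>k\<close> are the Lagrange basis polynomials at the \<open>l\<close> distinct roots
  \<open>\<mu>\<^sub>k = \<omega>\<^bsup>1+kr\<^esup>\<close> of \<open>y\<^sup>l - \<beta>\<close>; hence they sum to \<open>1\<close>, and \<open>\<eta>\<^sub>k(y) (y - \<mu>\<^sub>k)\<close> is a
  scalar multiple of \<open>y\<^sup>l - \<beta>\<close>. Since \<open>c(x,y) - c(x,\<mu>\<^sub>k)\<close> is divisible by \<open>y - \<mu>\<^sub>k\<close>,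
  modulo \<open>y\<^sup>l - \<beta>\<close> every \<open>c \<in> C\<close> satisfies \<open>\<eta>\<^sub>k(y) c = \<eta>\<^sub>k(y) c(x,\<mu>\<^sub>k)\<close>. So
  \<open>\<eta>\<^sub>k(y) c(x,\<mu>\<^sub>k) \<in> C\<close>, i.e. \<open>p\<^sub>k\<close> divides \<open>c(x,\<mu>\<^sub>k)\<close>, and \<open>c = \<Sum>\<^sub>k \<eta>\<^sub>k(y) c\<close> lies in the
  ideal generated by the \<open>\<eta>\<^sub>k(y) p\<^sub>k(x)\<close> and \<open>y\<^sup>l - \<beta>\<close>.
\<close>

lemma ideal_mult_left: "is_ideal I \<Longrightarrow> a \<in> I \<Longrightarrow> r * a \<in> I"
  unfolding is_ideal_def by blast

lemma ideal_dvd: "is_ideal I \<Longrightarrow> a \<in> I \<Longrightarrow> a dvd b \<Longrightarrow> b \<in> I"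
  by (auto simp: dvd_def mult.commute ideal_mult_left)

lemma ideal_add: "is_ideal I \<Longrightarrow> a \<in> I \<Longrightarrow> b \<in> I \<Longrightarrow> a + b \<in> I"
  unfolding is_ideal_def by blast

lemma ideal_diff:
  assumes "is_ideal I" "a \<in> I" "b \<in> I"
  shows "a - b \<in> I"
proof -
  have "a + (- 1) * b \<in> I"
    using assms by (intro ideal_add ideal_mult_left)
  then show ?thesis by simp
qed

lemma ideal_sum: "is_ideal I \<Longrightarrow> (\<And>x. x \<in> A \<Longrightarrow> f x \<in> I) \<Longrightarrow> sum f A \<in> I"
  by (induction A rule: infinite_finite_induct) (auto simp: is_ideal_def)

lemma ideal_mem_iff_of_dvd_diff:
  assumes "is_ideal I" "m \<in> I" "m dvd a - b"
  shows "a \<in> I \<longleftrightarrow> b \<in> I"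
proof -
  have "a - b \<in> I"
    using assms by (rule ideal_dvd)
  then show ?thesis
    using ideal_add[OF \<open>is_ideal I\<close>, of "a - b" b] ideal_diff[OF \<open>is_ideal I\<close>, of a "a - b"]
    by auto
qed

lemma is_ideal_ideal_gen: "is_ideal (ideal_gen S)"
  unfolding ideal_gen_def is_ideal_def by blast

lemma ideal_gen_subset: "S \<subseteq> ideal_gen S"
  unfolding ideal_gen_def by blast

lemma ideal_gen_least: "is_ideal I \<Longrightarrow> S \<subseteq> I \<Longrightarrow> ideal_gen S \<subseteq> I"
  unfolding ideal_gen_def by blast

lemma coeff_embY: "coeff (embY g) n = [:coeff g n:]"
  by (simp add: embY_def coeff_map_poly)

lemma embY_add: "embY (f + g) = embY f + embY g"
  by (rule poly_eqI) (simp add: coeff_embY)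

lemma embY_diff: "embY (f - g) = embY f - embY g"
  by (rule poly_eqI) (simp add: coeff_embY)

lemma embY_0 [simp]: "embY 0 = 0"
  by (simp add: embY_def)

lemma embY_sum: "embY (sum f A) = (\<Sum>x\<in>A. embY (f x))"
  by (induction A rule: infinite_finite_induct) (simp_all add: embY_add)

lemma embY_pCons: "embY (pCons a g) = pCons [:a:] (embY g)"
  by (simp add: embY_def map_poly_pCons)

lemma embY_1 [simp]: "embY 1 = 1"
  by (simp add: embY_def)

lemma embY_smult: "embY (smult c g) = smult [:c:] (embY g)"
  by (simp add: embY_def map_poly_smult)

lemma embY_mult: "embY (f * g) = embY f * embY g"
  by (induction f) (simp_all add: embY_add embY_smult embY_pCons)

lemma embY_monom: "embY (monom c n) = monom [:c:] n"
  by (simp add: embY_def map_poly_monom)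

definition lagrange_basis :: "('i \<Rightarrow> 'a::field) \<Rightarrow> 'i set \<Rightarrow> 'i \<Rightarrow> 'a poly" where
  "lagrange_basis \<mu> A j = (\<Prod>i\<in>A - {j}. smult (inverse (\<mu> j - \<mu> i)) [:- \<mu> i, 1:])"

lemma poly_lagrange_basis:
  assumes "finite A" "inj_on \<mu> A" "j \<in> A" "k \<in> A"
  shows "poly (lagrange_basis \<mu> A j) (\<mu> k) = (if j = k then 1 else 0)"
proof (cases "j = k")
  case True
  have "poly (smult (inverse (\<mu> j - \<mu> i)) [:- \<mu> i, 1:]) (\<mu> j) = 1" if "i \<in> A - {j}" for i
  proof -
    have "\<mu> j - \<mu> i \<noteq> 0"
      using assms that by (auto dest: inj_onD)
    moreover have "poly (smult (inverse (\<mu> j - \<mu> i)) [:- \<mu> i, 1:]) (\<mu> j) =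
        inverse (\<mu> j - \<mu> i) * (\<mu> j - \<mu> i)"
      by (simp add: algebra_simps)
    ultimately show ?thesis by simp
  qed
  then show ?thesis
    using True by (simp add: lagrange_basis_def poly_prod)
next
  case False
  then show ?thesis
    using assms by (simp add: lagrange_basis_def poly_prod) blast
qed

lemma degree_lagrange_basis: "degree (lagrange_basis \<mu> A j) \<le> card (A - {j})"
proof (cases "finite A")
  case True
  then have "degree (lagrange_basis \<mu> A j) \<le> (\<Sum>i\<in>A - {j}. 1)"
    unfolding lagrange_basis_def
    by (intro order_trans[OF degree_prod_sum_le] sum_mono) (auto intro: order_trans[OF degree_smult_le])
  then show ?thesis by simp
qed (simp add: lagrange_basis_def)

lemma sum_lagrange_basis:
  assumes "finite A" "A \<noteq> {}" "inj_on \<mu> A"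
  shows "(\<Sum>j\<in>A. lagrange_basis \<mu> A j) = 1"
proof (rule poly_eqI_degree)
  fix x assume "x \<in> \<mu> ` A"
  then obtain k where "k \<in> A" "x = \<mu> k" by blast
  then show "poly (\<Sum>j\<in>A. lagrange_basis \<mu> A j) x = poly 1 x"
    using assms by (simp add: poly_sum poly_lagrange_basis)
next
  have "degree (lagrange_basis \<mu> A j) \<le> card A - 1" if "j \<in> A" for j
    using degree_lagrange_basis[of \<mu> A j] assms that by simp
  then have "degree (\<Sum>j\<in>A. lagrange_basis \<mu> A j) \<le> card A - 1"
    using assms by (intro degree_sum_le) auto
  moreover have "0 < card A"
    using assms by (simp add: card_gt_0_iff)
  ultimately show "degree (\<Sum>j\<in>A. lagrange_basis \<mu> A j) < card (\<mu> ` A)"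
    using assms by (simp add: card_image)
qed (use assms in \<open>simp add: card_image card_gt_0_iff\<close>)

lemma lagrange_basis_mult_linear:
  assumes "finite A" "j \<in> A"
  shows "lagrange_basis \<mu> A j * [:- \<mu> j, 1:] =
    smult (\<Prod>i\<in>A - {j}. inverse (\<mu> j - \<mu> i)) (\<Prod>i\<in>A. [:- \<mu> i, 1:])"
proof -
  have "lagrange_basis \<mu> A j =
      smult (\<Prod>i\<in>A - {j}. inverse (\<mu> j - \<mu> i)) (\<Prod>i\<in>A - {j}. [:- \<mu> i, 1:])"
    unfolding lagrange_basis_def by (rule prod_smult)
  moreover have "(\<Prod>i\<in>A. [:- \<mu> i, 1:]) = [:- \<mu> j, 1:] * (\<Prod>i\<in>A - {j}. [:- \<mu> i, 1:])"
    using assms by (rule prod.remove)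
  ultimately show ?thesis
    by (simp only: mult_smult_left mult_smult_right mult.commute)
qed

lemma prod_linear_factors_eq_binomial:
  fixes \<mu> :: "'i \<Rightarrow> 'a::field"
  assumes "finite A" "A \<noteq> {}" "inj_on \<mu> A" "\<forall>i\<in>A. \<mu> i ^ card A = b"
  shows "(\<Prod>i\<in>A. [:- \<mu> i, 1:]) = monom 1 (card A) - [:b:]"
proof (rule poly_eqI_degree_lead_coeff[where A = "\<mu> ` A"])
  have "0 < card A"
    using assms by (simp add: card_gt_0_iff)
  moreover have "degree (\<Prod>i\<in>A. [:- \<mu> i, 1:]) = card A"
    by (simp add: degree_prod_eq_sum_degree)
  moreover have "lead_coeff (\<Prod>i\<in>A. [:- \<mu> i, 1:]) = 1"
    by (simp add: lead_coeff_prod)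
  ultimately show "coeff (\<Prod>i\<in>A. [:- \<mu> i, 1:]) (card A) = coeff (monom 1 (card A) - [:b:]) (card A)"
    and "degree (\<Prod>i\<in>A. [:- \<mu> i, 1:]) \<le> card A"
    by (auto simp: coeff_pCons split: nat.split)
next
  fix z assume "z \<in> \<mu> ` A"
  then show "poly (\<Prod>i\<in>A. [:- \<mu> i, 1:]) z = poly (monom 1 (card A) - [:b:]) z"
    using assms by (auto simp: poly_prod poly_monom)
next
  show "degree (monom 1 (card A) - [:b:]) \<le> card A"
    by (intro degree_diff_le) (simp_all add: degree_monom_le)
qed (use assms in \<open>simp add: card_image\<close>)

lemma embY_binomial: "embY (monom 1 n - [:b:]) = varY ^ n - [:[:b:]:]"
  by (simp add: embY_diff embY_monom embY_pCons varY_def) (simp add: monom_altdef flip: one_pCons)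

lemma embY_dvd_mult_sub_eval:
  fixes c :: "'a::field poly poly"
  assumes "L * [:- a, 1:] = smult k P"
  shows "embY P dvd embY L * c - embY L * embX (poly c [:a:])"
proof -
  have "[:- [:a:], 1:] dvd c - [:poly c [:a:]:]"
    using poly_eq_0_iff_dvd[of "c - [:poly c [:a:]:]" "[:a:]"] by simp
  then obtain q where q: "c - [:poly c [:a:]:] = [:- [:a:], 1:] * q" ..
  have "embY L * c - embY L * embX (poly c [:a:]) = embY L * (c - [:poly c [:a:]:])"
    by (simp add: embX_def right_diff_distrib)
  also have "\<dots> = embY L * [:- [:a:], 1:] * q"
    by (simp only: q mult.assoc)
  also have "[:- [:a:], 1:] = embY [:- a, 1:]"
    by (simp add: embY_pCons one_pCons)
  also have "embY L * embY [:- a, 1:] = embY (L * [:- a, 1:])"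
    by (simp only: embY_mult)
  also have "\<dots> = smult [:k:] (embY P)"
    by (simp only: assms embY_smult)
  finally show ?thesis
    by (simp add: dvd_smult)
qed

lemma ideal_subset_by_lagrange_components:
  fixes C I :: "'a::field poly poly set"
  assumes C: "is_ideal C" and I: "is_ideal I"
    and A: "finite A" "A \<noteq> {}" "inj_on \<mu> A" "\<forall>i\<in>A. \<mu> i ^ card A = b"
    and binomial: "varY ^ card A - [:[:b:]:] \<in> C" "varY ^ card A - [:[:b:]:] \<in> I"
    and components: "\<And>j f. j \<in> A \<Longrightarrow> embY (lagrange_basis \<mu> A j) * embX f \<in> C \<Longrightarrow>
      embY (lagrange_basis \<mu> A j) * embX f \<in> I"
  shows "C \<subseteq> I"
proof
  fix c assume "c \<in> C"
  have "embY (lagrange_basis \<mu> A j) * c \<in> I" if j: "j \<in> A" for j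
  proof -
    let ?L = "embY (lagrange_basis \<mu> A j)" and ?f = "poly c [:\<mu> j:]"
    have "lagrange_basis \<mu> A j * [:- \<mu> j, 1:] =
        smult (\<Prod>i\<in>A - {j}. inverse (\<mu> j - \<mu> i)) (monom 1 (card A) - [:b:])"
      unfolding prod_linear_factors_eq_binomial[OF A, symmetric]
      using \<open>finite A\<close> j by (rule lagrange_basis_mult_linear)
    from embY_dvd_mult_sub_eval[OF this, of c]
    have dvd: "varY ^ card A - [:[:b:]:] dvd ?L * c - ?L * embX ?f"
      by (simp only: embY_binomial)
    have "?L * c \<in> C"
      using C \<open>c \<in> C\<close> by (rule ideal_mult_left)
    then have "?L * embX ?f \<in> C"
      using ideal_mem_iff_of_dvd_diff[OF C binomial(1) dvd] by simp
    then have "?L * embX ?f \<in> I"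
      using components j by blast
    then show "?L * c \<in> I"
      using ideal_mem_iff_of_dvd_diff[OF I binomial(2) dvd] by simp
  qed
  then have "(\<Sum>j\<in>A. embY (lagrange_basis \<mu> A j) * c) \<in> I"
    using I by (intro ideal_sum)
  also have "(\<Sum>j\<in>A. embY (lagrange_basis \<mu> A j) * c) = c"
    using sum_lagrange_basis[OF A(1-3)] by (simp flip: sum_distrib_right embY_sum)
  finally show "c \<in> I" .
qed

lemma ideal_eq_ideal_gen_lagrange_components:
  fixes C :: "'a::field poly poly set"
  assumes C: "is_ideal C"
    and A: "finite A" "A \<noteq> {}" "inj_on \<mu> A" "\<forall>i\<in>A. \<mu> i ^ card A = b"
    and binomial: "varY ^ card A - [:[:b:]:] \<in> C" and "E \<subseteq> C"
    and components: "\<And>j. j \<in> A \<Longrightarrow> {f. embY (lagrange_basis \<mu> A j) * embX f \<in> C} = {g. p j dvd g}"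
  shows "C = ideal_gen ((\<lambda>j. embY (lagrange_basis \<mu> A j) * embX (p j)) ` A
                        \<union> {varY ^ card A - [:[:b:]:]} \<union> E)" (is "C = ideal_gen ?G")
proof
  have components_iff: "embY (lagrange_basis \<mu> A j) * embX f \<in> C \<longleftrightarrow> p j dvd f" if "j \<in> A" for j f
    using components[OF that] by (simp add: set_eq_iff)
  then show "ideal_gen ?G \<subseteq> C"
    by (intro ideal_gen_least[OF C]) (use binomial \<open>E \<subseteq> C\<close> in auto)
  show "C \<subseteq> ideal_gen ?G"
  proof (rule ideal_subset_by_lagrange_components[OF C is_ideal_ideal_gen A binomial])
    show "varY ^ card A - [:[:b:]:] \<in> ideal_gen ?G"
      by (rule subsetD[OF ideal_gen_subset]) simp
    fix j f assume j: "j \<in> A" and "embY (lagrange_basis \<mu> A j) * embX f \<in> C"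
    then have "p j dvd f"
      using components_iff by blast
    have "embY (lagrange_basis \<mu> A j) * embX (p j) \<in> ideal_gen ?G"
      by (rule subsetD[OF ideal_gen_subset]) (use j in simp)
    moreover from \<open>p j dvd f\<close>
    have "embY (lagrange_basis \<mu> A j) * embX (p j) dvd embY (lagrange_basis \<mu> A j) * embX f"
      unfolding embX_def by (intro mult_dvd_mono) simp_all
    ultimately show "embY (lagrange_basis \<mu> A j) * embX f \<in> ideal_gen ?G"
      by (rule ideal_dvd[OF is_ideal_ideal_gen])
  qed
qed

lemma inj_on_power_progression:
  fixes \<omega> :: "'a::field"
  assumes "0 < r * l" "\<omega> ^ (r * l) = 1" "\<forall>k. 0 < k \<and> k < r * l \<longrightarrow> \<omega> ^ k \<noteq> 1"
  shows "inj_on (\<lambda>i. \<omega> ^ (a + i * r)) {0..<l}"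
proof (rule linorder_inj_onI')
  fix i k assume "i \<in> {0..<l}" "k \<in> {0..<l}" "i < k"
  then have "0 < (k - i) * r" "(k - i) * r < r * l"
    using assms(1) by (simp_all add: mult.commute)
  then have "\<omega> ^ ((k - i) * r) \<noteq> 1"
    using assms(3) by blast
  moreover have "\<omega> ^ (a + k * r) = \<omega> ^ (a + i * r) * \<omega> ^ ((k - i) * r)"
    using \<open>i < k\<close> by (simp add: power_add[symmetric] diff_mult_distrib)
  moreover have "\<omega> \<noteq> 0"
    using assms(1,2) by (auto simp: power_0_left)
  ultimately show "\<omega> ^ (a + i * r) \<noteq> \<omega> ^ (a + k * r)"
    by simp
qed

lemma power_progression_power:
  fixes \<omega> :: "'a::comm_monoid_mult"
  assumes "\<omega> ^ (r * l) = 1"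
  shows "(\<omega> ^ (a + i * r)) ^ l = \<omega> ^ (a * l)"
proof -
  have "(\<omega> ^ (a + i * r)) ^ l = \<omega> ^ ((a + i * r) * l)"
    by (simp only: power_mult)
  also have "(a + i * r) * l = a * l + r * l * i"
    by (simp add: algebra_simps)
  also have "\<omega> ^ (a * l + r * l * i) = \<omega> ^ (a * l)"
    using assms by (simp add: power_add power_mult)
  finally show ?thesis .
qed

lemma one_less_card_UNIV: "1 < card (UNIV :: 'a::{finite,zero_neq_one} set)"
proof -
  have "card {0, 1 :: 'a} \<le> card (UNIV :: 'a set)"
    by (rule card_mono) auto
  then show ?thesis by simp
qed

theorem theorem1:
  fixes \<alpha> \<beta> \<omega> :: "'a::{finite,field}"
    and s l r :: nat
    and C :: "'a poly poly set"
    and p :: "nat \<Rightarrow> 'a poly"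
  assumes "s > 0" and "l > 0"
    and "\<alpha> \<noteq> 0" and "\<beta> \<noteq> 0"
    and "r = mult_ord \<beta>"
    and "(r * l) dvd (card (UNIV :: 'a set) - 1)"
    and "\<omega> ^ (r * l) = 1" and "\<forall>k. 0 < k \<and> k < r * l \<longrightarrow> \<omega> ^ k \<noteq> 1"
    and "\<omega> ^ l = \<beta>"
    and "is_ideal C"
    and "varX ^ s - [:[:\<alpha>:]:] \<in> C" and "varY ^ l - [:[:\<beta>:]:] \<in> C"
    and "\<forall>j<l. lead_coeff (p j) = 1 \<and> p j dvd (monom 1 s - [:\<alpha>:]) \<and>
           {f. embY (eta \<omega> r l j) * embX f \<in> C} = {g. p j dvd g}"
  shows "C = ideal_gen ((\<lambda>j. embY (eta \<omega> r l j) * embX (p j)) ` {0..<l}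
                        \<union> {varX ^ s - [:[:\<alpha>:]:], varY ^ l - [:[:\<beta>:]:]})"
proof -
  define \<mu> where "\<mu> i = \<omega> ^ (1 + i * r)" for i
  have "0 < card (UNIV :: 'a set) - 1"
    using one_less_card_UNIV by simp
  then have "0 < r * l"
    using assms(6) by (rule dvd_pos_nat)
  then have inj: "inj_on \<mu> {0..<l}"
    unfolding \<mu>_def using assms(7,8) by (rule inj_on_power_progression)
  have roots: "\<forall>i\<in>{0..<l}. \<mu> i ^ card {0..<l} = \<beta>"
    using power_progression_power[OF assms(7), of 1] assms(9) by (simp add: \<mu>_def)
  have eta: "eta \<omega> r l = lagrange_basis \<mu> {0..<l}"
    by (simp add: fun_eq_iff eta_def lagrange_basis_def \<mu>_def)
  have "C = ideal_gen ((\<lambda>j. embY (eta \<omega> r l j) * embX (p j)) ` {0..<l}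
                       \<union> {varY ^ card {0..<l} - [:[:\<beta>:]:]} \<union> {varX ^ s - [:[:\<alpha>:]:]})"
    unfolding eta
    by (rule ideal_eq_ideal_gen_lagrange_components[OF assms(10) _ _ inj roots])
      (use assms(2,11-13) in \<open>simp_all add: eta\<close>)
  then show ?thesis
    by simp
qed

end
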